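(* Let $\ell$ be a prime, $F$ a finite extension of $\mathbb{Q}_p$ for some prime $p$, and $\Xi$ an algebraic extension of $F$ with $\mu_\ell\subseteq\Xi$ and $\Xi^\times=\Xi^{\times\ell}$. Then $\ell^\infty$ divides the supernatural degree $[\Xi:F]$.
   Context: The supernatural degree of an algebraic extension is the lcm (as a supernatural number) of the degrees of its finite subextensions. *)

theory Defs
  imports "HOL-Algebra.Algebra" "HOL-Computational_Algebra.Computational_Algebra"
    "HOL-Library.Extended_Nat"
begin

definition padic_val_rat :: "nat \<Rightarrow> rat \<Rightarrow> int" where
  "padic_val_rat p q =
     (let (a, b) = quotient_of q
      in int (multiplicity (int p) a) - int (multiplicity (int p) b))"

definition padic_abs :: "nat \<Rightarrow> rat \<Rightarrow> real" where
  "padic_abs p q = (if q = 0 then 0 else real p powr (- real_of_int (padic_val_rat p q)))"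

definition padic_cauchy :: "nat \<Rightarrow> (nat \<Rightarrow> rat) \<Rightarrow> bool" where
  "padic_cauchy p S \<longleftrightarrow>
     (\<forall>e::real. 0 < e \<longrightarrow> (\<exists>N. \<forall>m n. N \<le> m \<longrightarrow> N \<le> n \<longrightarrow> padic_abs p (S m - S n) < e))"

definition padic_null :: "nat \<Rightarrow> (nat \<Rightarrow> rat) \<Rightarrow> bool" where
  "padic_null p S \<longleftrightarrow> (\<forall>e::real. 0 < e \<longrightarrow> (\<exists>N. \<forall>n. N \<le> n \<longrightarrow> padic_abs p (S n) < e))"

definition padic_class :: "nat \<Rightarrow> (nat \<Rightarrow> rat) \<Rightarrow> (nat \<Rightarrow> rat) set" where
  "padic_class p S = {T. padic_cauchy p T \<and> padic_null p (\<lambda>n. S n - T n)}"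

definition padic_rep :: "(nat \<Rightarrow> rat) set \<Rightarrow> (nat \<Rightarrow> rat)" where
  "padic_rep A = (SOME S. S \<in> A)"

definition Qp :: "nat \<Rightarrow> (nat \<Rightarrow> rat) set ring" where
  "Qp p = \<lparr> carrier = {padic_class p S | S. padic_cauchy p S},
            monoid.mult = (\<lambda>A B. padic_class p (\<lambda>n. padic_rep A n * padic_rep B n)),
            monoid.one = padic_class p (\<lambda>n. 1),
            ring.zero = padic_class p (\<lambda>n. 0),
            ring.add = (\<lambda>A B. padic_class p (\<lambda>n. padic_rep A n + padic_rep B n)) \<rparr>"

text \<open>Extensions are modelled as subfields of an ambient field \<open>R\<close>.
  A supernatural number is a function from primes to exponents in \<open>enat\<close>.
  The supernatural degree of an algebraic extension \<open>E/K\<close> is the lcm of the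
  degrees of its finite subextensions, i.e. at each prime \<open>q\<close> the supremum of
  the \<open>q\<close>-adic valuations of those degrees.\<close>
definition supernatural_degree ::
  "('a, 'b) ring_scheme \<Rightarrow> 'a set \<Rightarrow> 'a set \<Rightarrow> nat \<Rightarrow> enat" where
  "supernatural_degree R K E q =
     (SUP L \<in> {L. subfield L R \<and> K \<subseteq> L \<and> L \<subseteq> E \<and> ring.finite_dimension R K L}.
        enat (multiplicity q (ring.dim R K L)))"

end

theory Submission
  imports Defs
begin

text \<open>Let \<open>\<pi>\<close> be the image of \<open>p\<close> in \<open>F\<close>. Since every nonzero element of \<open>\<Xi>\<close> has an
  \<open>l\<close>-th root in \<open>\<Xi>\<close>, for every \<open>n\<close> there is \<open>\<alpha> \<in> \<Xi>\<close> with \<open>\<alpha>\<^sup>N = \<pi>\<close>, \<open>N = l\<^sup>n\<close>. All roots of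
  the minimal polynomial of \<open>\<alpha>\<close> over \<open>\<rat>\<^sub>p\<close> are \<open>N\<close>-th roots of \<open>\<pi>\<close>, so its constant term
  \<open>c \<in> \<rat>\<^sub>p\<close> satisfies \<open>c\<^sup>2\<^sup>N = p\<^sup>2\<^sup>d\<close> with \<open>d = [\<rat>\<^sub>p(\<alpha>) : \<rat>\<^sub>p]\<close>, and comparing \<open>p\<close>-adic absolute
  values gives \<open>N dvd d\<close>. As \<open>d\<close> divides \<open>[F : \<rat>\<^sub>p] [F(\<alpha>) : F]\<close>, the \<open>l\<close>-adic valuation of
  \<open>[F(\<alpha>) : F]\<close> is at least \<open>n - v\<^sub>l[F : \<rat>\<^sub>p]\<close>.\<close>

lemma SUP_enat_eq_infinity:
  assumes "\<And>n. \<exists>x\<in>A. n \<le> f x"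
  shows "(SUP x\<in>A. enat (f x)) = \<infinity>"
proof (rule ccontr)
  assume "(SUP x\<in>A. enat (f x)) \<noteq> \<infinity>"
  then obtain k where k: "(SUP x\<in>A. enat (f x)) = enat k" by auto
  obtain x where "x \<in> A" "Suc k \<le> f x" using assms by blast
  thus False using SUP_upper[of x A "\<lambda>x. enat (f x)"] k by simp
qed

lemma pow_dvd_mult_imp_le_multiplicity:
  fixes q a b :: nat
  assumes "Factorial_Ring.prime q" "a \<noteq> 0" "b \<noteq> 0" "q ^ n dvd a * b"
  shows "n \<le> multiplicity q a + multiplicity q b"
proof -
  have "n \<le> multiplicity q (a * b)"
    using assms by (intro multiplicity_geI) (auto simp: prime_def)
  thus ?thesis using assms(1-3) by (simp add: prime_elem_multiplicity_mult_distrib)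
qed

lemma (in monoid) iterated_root_pow:
  fixes l n :: nat
  assumes "\<And>x. x \<in> S \<Longrightarrow> \<exists>y\<in>S. y [^] l = x" "S \<subseteq> carrier G" "x \<in> S"
  shows "\<exists>y\<in>S. y [^] (l ^ n) = x"
proof (induct n)
  case (Suc n)
  then obtain a where a: "a \<in> S" "a [^] (l ^ n) = x" by blast
  then obtain y where y: "y \<in> S" "y [^] l = a" using assms(1) by blast
  hence "y [^] (l ^ Suc n) = x" using a assms(2) nat_pow_pow[of y l "l ^ n"] by auto
  thus ?case using y(1) by blast
qed (use assms(2,3) in \<open>auto intro!: bexI[of _ x]\<close>)

section \<open>The \<open>p\<close>-adic absolute value on \<open>\<rat>\<close>\<close>

lemma rat_int_quotient: obtains a b where "(x::rat) = of_int a / of_int b" "b \<noteq> 0"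
  by (cases x rule: Rat_cases) (auto simp: Fract_of_int_quotient)

locale padic =
  fixes p :: nat
  assumes prime: "Factorial_Ring.prime p"
begin

lemma prime_elem_int: "prime_elem (int p)"
  using prime by simp

lemma p_gt_1: "real p > 1"
  using prime prime_gt_1_nat by auto

lemma multiplicity_int_mult:
  "a \<noteq> 0 \<Longrightarrow> b \<noteq> 0 \<Longrightarrow>
     multiplicity (int p) (a * b) = multiplicity (int p) a + multiplicity (int p) b"
  by (rule prime_elem_multiplicity_mult_distrib[OF prime_elem_int])

lemma padic_val_rat_of_int_div:
  assumes a: "a \<noteq> 0" and b: "b \<noteq> 0"
  shows "padic_val_rat p (of_int a / of_int b) =
           int (multiplicity (int p) a) - int (multiplicity (int p) b)"
proof -
  obtain a' b' where q: "quotient_of (of_int a / of_int b) = (a', b')"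
    by (cases "quotient_of (of_int a / of_int b)") auto
  have b': "b' > 0" using quotient_of_denom_pos[OF q] .
  have "(of_int a / of_int b :: rat) = of_int a' / of_int b'" using quotient_of_div[OF q] .
  hence "of_int (a * b') = (of_int (a' * b) :: rat)" using b b' by (simp add: field_simps)
  hence cross: "a * b' = a' * b" by (simp only: of_int_eq_iff)
  hence a': "a' \<noteq> 0" using a b b' by auto
  have "multiplicity (int p) a + multiplicity (int p) b' =
        multiplicity (int p) a' + multiplicity (int p) b"
    using cross multiplicity_int_mult a b a' b' by (metis less_irrefl)
  thus ?thesis unfolding padic_val_rat_def q by simp
qed

lemma padic_val_rat_mult:
  assumes "x \<noteq> 0" "y \<noteq> 0"
  shows "padic_val_rat p (x * y) = padic_val_rat p x + padic_val_rat p y"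
proof -
  obtain a b where x: "x = of_int a / of_int b" "b \<noteq> 0" by (rule rat_int_quotient)
  obtain c d where y: "y = of_int c / of_int d" "d \<noteq> 0" by (rule rat_int_quotient)
  have "a \<noteq> 0" "c \<noteq> 0" using x y assms by auto
  moreover have "x * y = of_int (a * c) / of_int (b * d)" using x y by simp
  ultimately show ?thesis
    using x y padic_val_rat_of_int_div[of "a * c" "b * d"]
    by (simp add: padic_val_rat_of_int_div multiplicity_int_mult)
qed

lemma padic_val_rat_add:
  assumes "x \<noteq> 0" "y \<noteq> 0" "x + y \<noteq> 0"
  shows "padic_val_rat p (x + y) \<ge> min (padic_val_rat p x) (padic_val_rat p y)"
proof -
  obtain a b where x: "x = of_int a / of_int b" "b \<noteq> 0" by (rule rat_int_quotient)
  obtain c d where y: "y = of_int c / of_int d" "d \<noteq> 0" by (rule rat_int_quotient)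
  have a: "a \<noteq> 0" and c: "c \<noteq> 0" using x y assms by auto
  have xy: "x + y = of_int (a * d + c * b) / of_int (b * d)" using x y by (simp add: field_simps)
  have s: "a * d + c * b \<noteq> 0" using xy assms(3) by (auto simp del: of_int_add of_int_mult)
  define k where "k = min (multiplicity (int p) (a * d)) (multiplicity (int p) (c * b))"
  have "int p ^ k dvd a * d" "int p ^ k dvd c * b"
    unfolding k_def by (meson le_imp_power_dvd min.cobounded1 min.cobounded2 multiplicity_dvd dvd_trans)+
  hence "int p ^ k dvd a * d + c * b" by simp
  hence "k \<le> multiplicity (int p) (a * d + c * b)"
    using s prime_elem_int by (intro multiplicity_geI) (auto simp: prime_elem_def)
  thus ?thesis
    using a c x y s padic_val_rat_of_int_div[OF s, of "b * d"] unfolding xy k_def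
    by (simp add: padic_val_rat_of_int_div multiplicity_int_mult del: of_int_add of_int_mult)
qed

lemma padic_val_rat_minus: "padic_val_rat p (- x) = padic_val_rat p x"
proof (cases "x = 0")
  case False
  obtain a b where x: "x = of_int a / of_int b" "b \<noteq> 0" by (rule rat_int_quotient)
  with False have "a \<noteq> 0" by auto
  moreover have "- x = of_int (- a) / of_int b" using x by simp
  ultimately show ?thesis
    using x padic_val_rat_of_int_div[of "- a" b] padic_val_rat_of_int_div[of a b] by simp
qed simp

lemma padic_val_rat_p: "padic_val_rat p (of_nat p) = 1"
proof -
  have "quotient_of (of_nat p) = (int p, 1)" by (simp add: quotient_of_rat_of_nat)
  moreover have "multiplicity (int p) (int p) = 1" using prime by (simp add: multiplicity_self)
  ultimately show ?thesis unfolding padic_val_rat_def by simp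
qed

lemma padic_abs_0 [simp]: "padic_abs p 0 = 0"
  unfolding padic_abs_def by simp

lemma padic_abs_nonneg: "padic_abs p x \<ge> 0"
  unfolding padic_abs_def by simp

lemma padic_abs_eq_0_iff [simp]: "padic_abs p x = 0 \<longleftrightarrow> x = 0"
  unfolding padic_abs_def using p_gt_1 by simp

lemma padic_abs_1 [simp]: "padic_abs p 1 = 1"
  unfolding padic_abs_def padic_val_rat_def using p_gt_1 by simp

lemma padic_abs_p: "padic_abs p (of_nat p) = inverse (real p)"
  unfolding padic_abs_def using padic_val_rat_p p_gt_1 by (simp add: powr_minus)

lemma padic_abs_powr: "x \<noteq> 0 \<Longrightarrow> \<exists>k::int. padic_abs p x = real p powr k"
  unfolding padic_abs_def by (intro exI[of _ "- padic_val_rat p x"]) simp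

lemma padic_abs_mult: "padic_abs p (x * y) = padic_abs p x * padic_abs p y"
  by (cases "x = 0 \<or> y = 0")
     (auto simp: padic_abs_def padic_val_rat_mult powr_add[symmetric])

lemma padic_abs_minus: "padic_abs p (- x) = padic_abs p x"
  unfolding padic_abs_def by (simp add: padic_val_rat_minus)

lemma padic_abs_minus_commute: "padic_abs p (x - y) = padic_abs p (y - x)"
  using padic_abs_minus[of "x - y"] by simp

lemma padic_abs_inverse: "padic_abs p (inverse x) = inverse (padic_abs p x)"
  using padic_abs_mult[of x "inverse x"] by (cases "x = 0") (auto simp: field_simps)

lemma padic_abs_ultrametric: "padic_abs p (x + y) \<le> max (padic_abs p x) (padic_abs p y)"
proof (cases "x = 0 \<or> y = 0 \<or> x + y = 0")
  case True
  thus ?thesis using padic_abs_nonneg[of x] padic_abs_nonneg[of y] by auto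
next
  case False
  hence "padic_val_rat p (x + y) \<ge> min (padic_val_rat p x) (padic_val_rat p y)"
    by (intro padic_val_rat_add) auto
  thus ?thesis
    using False p_gt_1 unfolding padic_abs_def
    by (cases "padic_val_rat p x \<le> padic_val_rat p y") (auto simp: max_def min_def)
qed

lemma padic_abs_triangle: "padic_abs p (x + y) \<le> padic_abs p x + padic_abs p y"
  using padic_abs_ultrametric[of x y] padic_abs_nonneg[of x] padic_abs_nonneg[of y] by linarith

lemma padic_abs_add_eq:
  assumes "padic_abs p y < padic_abs p x"
  shows "padic_abs p (x + y) = padic_abs p x"
  using assms padic_abs_ultrametric[of x y] padic_abs_ultrametric[of "x + y" "- y"]
  by (auto simp: padic_abs_minus max_def split: if_splits)

lemma padic_abs_diff_abs_le: "\<bar>padic_abs p x - padic_abs p y\<bar> \<le> padic_abs p (x - y)"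
  using padic_abs_triangle[of "x - y" y] padic_abs_triangle[of "y - x" x]
    padic_abs_minus_commute[of x y] by simp

end

section \<open>Cauchy sequences of rationals\<close>

lemma tendsto_zero_if_abs_le:
  fixes x c :: "nat \<Rightarrow> real"
  assumes "\<And>n. \<bar>x n\<bar> \<le> c n" "c \<longlonglongrightarrow> 0"
  shows "x \<longlonglongrightarrow> 0"
proof (rule tendsto_sandwich[OF always_eventually always_eventually])
  show "\<forall>n. - c n \<le> x n" using assms(1) by (meson abs_le_D2 minus_le_iff)
  show "\<forall>n. x n \<le> c n" using assms(1) abs_le_D1 by blast
  show "(\<lambda>n. - c n) \<longlonglongrightarrow> 0" using tendsto_minus[OF assms(2)] by simp
qed (rule assms(2))

context padic
begin

lemma padic_null_iff_tendsto: "padic_null p S \<longleftrightarrow> (\<lambda>n. padic_abs p (S n)) \<longlonglongrightarrow> 0"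
  unfolding padic_null_def LIMSEQ_iff using padic_abs_nonneg by simp

lemma padic_null_comparison:
  assumes "\<And>n. padic_abs p (T n) \<le> B n" "B \<longlonglongrightarrow> 0"
  shows "padic_null p T"
  unfolding padic_null_iff_tendsto
  by (rule tendsto_zero_if_abs_le[OF _ assms(2)]) (simp add: assms(1) padic_abs_nonneg)

lemma padic_null_add: "padic_null p S \<Longrightarrow> padic_null p T \<Longrightarrow> padic_null p (\<lambda>n. S n + T n)"
  unfolding padic_null_iff_tendsto[of S] padic_null_iff_tendsto[of T]
  by (rule padic_null_comparison[OF padic_abs_triangle tendsto_add_zero])

lemma padic_null_minus: "padic_null p S \<Longrightarrow> padic_null p (\<lambda>n. - S n)"
  unfolding padic_null_def padic_abs_minus .

lemma padic_null_diff: "padic_null p S \<Longrightarrow> padic_null p T \<Longrightarrow> padic_null p (\<lambda>n. S n - T n)"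
  using padic_null_add[OF _ padic_null_minus] by simp

lemma padic_null_eventually_eq:
  "padic_null p S \<Longrightarrow> eventually (\<lambda>n. S n = T n) sequentially \<Longrightarrow> padic_null p T"
  unfolding padic_null_iff_tendsto
  by (erule Lim_transform_eventually) (auto elim: eventually_mono)

lemma padic_null_mult_bounded:
  assumes "padic_null p S" "\<And>n. padic_abs p (T n) \<le> B"
  shows "padic_null p (\<lambda>n. S n * T n)"
proof (rule padic_null_comparison)
  show "padic_abs p (S n * T n) \<le> padic_abs p (S n) * B" for n
    using assms(2) by (simp add: padic_abs_mult padic_abs_nonneg mult_left_mono)
  show "(\<lambda>n. padic_abs p (S n) * B) \<longlonglongrightarrow> 0"
    using assms(1) unfolding padic_null_iff_tendsto by (simp add: tendsto_mult_left_zero)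
qed

lemma padic_cauchy_const: "padic_cauchy p (\<lambda>n. c)"
  unfolding padic_cauchy_def by simp

lemma padic_cauchy_add:
  assumes "padic_cauchy p S" "padic_cauchy p T"
  shows "padic_cauchy p (\<lambda>n. S n + T n)"
  unfolding padic_cauchy_def
proof (intro allI impI)
  fix e :: real assume e: "e > 0"
  obtain N1 where N1: "\<And>m n. N1 \<le> m \<Longrightarrow> N1 \<le> n \<Longrightarrow> padic_abs p (S m - S n) < e"
    using assms(1) e unfolding padic_cauchy_def by blast
  obtain N2 where N2: "\<And>m n. N2 \<le> m \<Longrightarrow> N2 \<le> n \<Longrightarrow> padic_abs p (T m - T n) < e"
    using assms(2) e unfolding padic_cauchy_def by blast
  have "\<forall>m n. max N1 N2 \<le> m \<longrightarrow> max N1 N2 \<le> n \<longrightarrow> padic_abs p (S m + T m - (S n + T n)) < e"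
  proof (intro allI impI)
    fix m n assume "max N1 N2 \<le> m" "max N1 N2 \<le> n"
    thus "padic_abs p (S m + T m - (S n + T n)) < e"
      using padic_abs_ultrametric[of "S m - S n" "T m - T n"] N1[of m n] N2[of m n]
      by (simp add: algebra_simps)
  qed
  thus "\<exists>N. \<forall>m n. N \<le> m \<longrightarrow> N \<le> n \<longrightarrow> padic_abs p (S m + T m - (S n + T n)) < e"
    by (rule exI[of _ "max N1 N2"])
qed

lemma padic_cauchy_minus: "padic_cauchy p S \<Longrightarrow> padic_cauchy p (\<lambda>n. - S n)"
  unfolding padic_cauchy_def by (simp add: padic_abs_minus_commute)

lemma padic_cauchy_bounded:
  assumes "padic_cauchy p S"
  obtains B where "\<And>n. padic_abs p (S n) \<le> B"
proof -
  obtain N where N: "\<And>n. N \<le> n \<Longrightarrow> padic_abs p (S n - S N) < 1"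
    using assms zero_less_one unfolding padic_cauchy_def by blast
  define B where "B = 1 + (\<Sum>i\<le>N. padic_abs p (S i))"
  have le_sum: "padic_abs p (S i) \<le> (\<Sum>i\<le>N. padic_abs p (S i))" if "i \<le> N" for i
    using member_le_sum[of i "{..N}" "\<lambda>i. padic_abs p (S i)"] that padic_abs_nonneg by simp
  have "padic_abs p (S n) \<le> B" for n
  proof (cases "n \<le> N")
    case True
    thus ?thesis using le_sum unfolding B_def by fastforce
  next
    case False
    have "padic_abs p (S n - S N) \<le> B" "padic_abs p (S N) \<le> B"
      using N[of n] False le_sum[of N] padic_abs_nonneg[of "S N"] unfolding B_def by auto
    thus ?thesis using padic_abs_ultrametric[of "S n - S N" "S N"] by simp
  qed
  thus ?thesis using that by blast
qed

lemma padic_cauchy_mult: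
  assumes S: "padic_cauchy p S" and T: "padic_cauchy p T"
  shows "padic_cauchy p (\<lambda>n. S n * T n)"
  unfolding padic_cauchy_def
proof (intro allI impI)
  fix e :: real assume e: "e > 0"
  obtain B1 where B1: "\<And>n. padic_abs p (S n) \<le> B1" using padic_cauchy_bounded[OF S] by blast
  obtain B2 where B2: "\<And>n. padic_abs p (T n) \<le> B2" using padic_cauchy_bounded[OF T] by blast
  define B where "B = max 1 (max B1 B2)"
  have B: "B > 0" "\<And>n. padic_abs p (S n) \<le> B" "\<And>n. padic_abs p (T n) \<le> B"
    unfolding B_def using B1 B2 by (auto intro: le_max_iff_disj[THEN iffD2])
  have eB: "e / B > 0" using e B(1) by simp
  obtain N1 where N1: "\<And>m n. N1 \<le> m \<Longrightarrow> N1 \<le> n \<Longrightarrow> padic_abs p (S m - S n) < e / B"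
    using S eB unfolding padic_cauchy_def by blast
  obtain N2 where N2: "\<And>m n. N2 \<le> m \<Longrightarrow> N2 \<le> n \<Longrightarrow> padic_abs p (T m - T n) < e / B"
    using T eB unfolding padic_cauchy_def by blast
  have "\<forall>m n. max N1 N2 \<le> m \<longrightarrow> max N1 N2 \<le> n \<longrightarrow> padic_abs p (S m * T m - S n * T n) < e"
  proof (intro allI impI)
    fix m n assume "max N1 N2 \<le> m" "max N1 N2 \<le> n"
    hence "B * padic_abs p (S m - S n) < e" "B * padic_abs p (T m - T n) < e"
      using N1[of m n] N2[of m n] B(1) by (simp_all add: pos_less_divide_eq mult.commute)
    moreover have "padic_abs p (S m) * padic_abs p (T m - T n) \<le> B * padic_abs p (T m - T n)"
      by (rule mult_right_mono[OF B(2) padic_abs_nonneg])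
    moreover have "padic_abs p (T n) * padic_abs p (S m - S n) \<le> B * padic_abs p (S m - S n)"
      by (rule mult_right_mono[OF B(3) padic_abs_nonneg])
    moreover have "S m * T m - S n * T n = S m * (T m - T n) + T n * (S m - S n)"
      by (simp add: algebra_simps)
    ultimately show "padic_abs p (S m * T m - S n * T n) < e"
      using padic_abs_ultrametric[of "S m * (T m - T n)" "T n * (S m - S n)"]
      by (simp add: padic_abs_mult)
  qed
  thus "\<exists>N. \<forall>m n. N \<le> m \<longrightarrow> N \<le> n \<longrightarrow> padic_abs p (S m * T m - S n * T n) < e"
    by (rule exI[of _ "max N1 N2"])
qed

lemma padic_cauchy_abs_eventually_const:
  assumes "padic_cauchy p S" "\<not> padic_null p S"
  obtains N c where "c > 0" "\<And>n. N \<le> n \<Longrightarrow> padic_abs p (S n) = c"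
proof -
  obtain e where e: "e > 0" "\<And>N. \<exists>n\<ge>N. padic_abs p (S n) \<ge> e"
    using assms(2) unfolding padic_null_def by (auto simp: not_less)
  obtain N where N: "\<And>m n. N \<le> m \<Longrightarrow> N \<le> n \<Longrightarrow> padic_abs p (S m - S n) < e"
    using assms(1) e(1) unfolding padic_cauchy_def by blast
  obtain n0 where n0: "N \<le> n0" "padic_abs p (S n0) \<ge> e" using e(2) by blast
  have "padic_abs p (S n) = padic_abs p (S n0)" if "N \<le> n" for n
    using padic_abs_add_eq[of "S n - S n0" "S n0"] N[OF that n0(1)] n0(2) by simp
  thus ?thesis using that[of "padic_abs p (S n0)" N] n0(2) e(1) by simp
qed

lemma padic_cauchy_inverse:
  assumes "padic_cauchy p S" "\<not> padic_null p S"
  shows "padic_cauchy p (\<lambda>n. inverse (S n))"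
  unfolding padic_cauchy_def
proof (intro allI impI)
  fix e :: real assume e: "e > 0"
  obtain N0 c where c: "c > 0" "\<And>n. N0 \<le> n \<Longrightarrow> padic_abs p (S n) = c"
    using padic_cauchy_abs_eventually_const[OF assms] by blast
  obtain N1 where N1: "\<And>m n. N1 \<le> m \<Longrightarrow> N1 \<le> n \<Longrightarrow> padic_abs p (S m - S n) < e * (c * c)"
    using assms(1) e c(1) unfolding padic_cauchy_def by (meson mult_pos_pos)
  have "\<forall>m n. max N0 N1 \<le> m \<longrightarrow> max N0 N1 \<le> n \<longrightarrow> padic_abs p (inverse (S m) - inverse (S n)) < e"
  proof (intro allI impI)
    fix m n assume mn: "max N0 N1 \<le> m" "max N0 N1 \<le> n"
    have abs: "padic_abs p (S m) = c" "padic_abs p (S n) = c" using c mn by auto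
    hence "S m \<noteq> 0" "S n \<noteq> 0" using c(1) by auto
    hence "inverse (S m) - inverse (S n) = (S n - S m) * inverse (S m) * inverse (S n)"
      by (simp add: field_simps)
    hence "padic_abs p (inverse (S m) - inverse (S n)) = padic_abs p (S n - S m) / (c * c)"
      by (simp only: padic_abs_mult padic_abs_inverse abs divide_inverse mult.assoc inverse_mult_distrib)
    also have "\<dots> < e"
      using N1[of m n] mn c(1) by (simp add: padic_abs_minus_commute pos_divide_less_eq)
    finally show "padic_abs p (inverse (S m) - inverse (S n)) < e" .
  qed
  thus "\<exists>N. \<forall>m n. N \<le> m \<longrightarrow> N \<le> n \<longrightarrow> padic_abs p (inverse (S m) - inverse (S n)) < e"
    by (rule exI[of _ "max N0 N1"])
qed

lemma padic_cauchy_abs_convergent: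
  assumes "padic_cauchy p S"
  shows "convergent (\<lambda>n. padic_abs p (S n))"
proof (rule real_Cauchy_convergent, rule metric_CauchyI)
  fix e :: real assume "e > 0"
  then obtain N where N: "\<And>m n. N \<le> m \<Longrightarrow> N \<le> n \<Longrightarrow> padic_abs p (S m - S n) < e"
    using assms unfolding padic_cauchy_def by blast
  have "dist (padic_abs p (S m)) (padic_abs p (S n)) < e" if "N \<le> m" "N \<le> n" for m n
    using N[OF that] padic_abs_diff_abs_le[of "S m" "S n"] unfolding dist_real_def by linarith
  thus "\<exists>M. \<forall>m\<ge>M. \<forall>n\<ge>M. dist (padic_abs p (S m)) (padic_abs p (S n)) < e"
    by blast
qed

lemma padic_null_diff_abs_tendsto:
  assumes "padic_null p (\<lambda>n. S n - T n)"
  shows "(\<lambda>n. padic_abs p (S n) - padic_abs p (T n)) \<longlonglongrightarrow> 0"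
  using assms unfolding padic_null_iff_tendsto
  by (rule tendsto_zero_if_abs_le[OF padic_abs_diff_abs_le])

end

section \<open>The completion \<open>Qp p\<close>\<close>

text \<open>\<open>Qp p\<close> is never shown to be a ring: the injectivity of a ring homomorphism out of it and
  the subfield property of its image only need additive and multiplicative inverses.\<close>

definition Qp_abs :: "nat \<Rightarrow> (nat \<Rightarrow> rat) set \<Rightarrow> real" where
  "Qp_abs p A = lim (\<lambda>n. padic_abs p (padic_rep A n))"

definition Qp_uminus :: "nat \<Rightarrow> (nat \<Rightarrow> rat) set \<Rightarrow> (nat \<Rightarrow> rat) set" where
  "Qp_uminus p A = padic_class p (\<lambda>n. - padic_rep A n)"

definition Qp_inverse :: "nat \<Rightarrow> (nat \<Rightarrow> rat) set \<Rightarrow> (nat \<Rightarrow> rat) set" where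
  "Qp_inverse p A = padic_class p (\<lambda>n. inverse (padic_rep A n))"

definition Qp_p :: "nat \<Rightarrow> (nat \<Rightarrow> rat) set" where
  "Qp_p p = padic_class p (\<lambda>n. of_nat p)"

lemma Qp_simps:
  "carrier (Qp p) = {padic_class p S | S. padic_cauchy p S}"
  "A \<otimes>\<^bsub>Qp p\<^esub> B = padic_class p (\<lambda>n. padic_rep A n * padic_rep B n)"
  "A \<oplus>\<^bsub>Qp p\<^esub> B = padic_class p (\<lambda>n. padic_rep A n + padic_rep B n)"
  "\<one>\<^bsub>Qp p\<^esub> = padic_class p (\<lambda>n. 1)"
  "\<zero>\<^bsub>Qp p\<^esub> = padic_class p (\<lambda>n. 0)"
  by (simp_all add: Qp_def)

context padic
begin

lemma mem_padic_class_iff: "T \<in> padic_class p S \<longleftrightarrow> padic_cauchy p T \<and> padic_null p (\<lambda>n. S n - T n)"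
  unfolding padic_class_def by simp

lemma padic_class_self: "padic_cauchy p S \<Longrightarrow> S \<in> padic_class p S"
  unfolding mem_padic_class_iff padic_null_def by simp

lemma padic_rep_class:
  assumes "padic_cauchy p S"
  shows "padic_cauchy p (padic_rep (padic_class p S))"
    and "padic_null p (\<lambda>n. S n - padic_rep (padic_class p S) n)"
proof -
  have "padic_rep (padic_class p S) \<in> padic_class p S"
    unfolding padic_rep_def
    by (rule someI[of "\<lambda>T. T \<in> padic_class p S", OF padic_class_self[OF assms]])
  thus "padic_cauchy p (padic_rep (padic_class p S))"
    "padic_null p (\<lambda>n. S n - padic_rep (padic_class p S) n)"
    unfolding mem_padic_class_iff by auto
qed

lemma padic_class_eq_iff:
  assumes "padic_cauchy p S" "padic_cauchy p T"
  shows "padic_class p S = padic_class p T \<longleftrightarrow> padic_null p (\<lambda>n. S n - T n)"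
proof
  assume "padic_class p S = padic_class p T"
  hence "T \<in> padic_class p S" using padic_class_self[OF assms(2)] by simp
  thus "padic_null p (\<lambda>n. S n - T n)" unfolding mem_padic_class_iff by simp
next
  assume ST: "padic_null p (\<lambda>n. S n - T n)"
  have "padic_null p (\<lambda>n. S n - U n) \<longleftrightarrow> padic_null p (\<lambda>n. T n - U n)" for U
    using padic_null_diff[OF _ ST, of "\<lambda>n. S n - U n"] padic_null_add[OF _ ST, of "\<lambda>n. T n - U n"]
    by auto
  thus "padic_class p S = padic_class p T"
    unfolding padic_class_def by auto
qed

lemma padic_class_in_carrier: "padic_cauchy p S \<Longrightarrow> padic_class p S \<in> carrier (Qp p)"
  unfolding Qp_simps by blast

lemma Qp_carrier_rep:
  assumes "A \<in> carrier (Qp p)"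
  shows "padic_cauchy p (padic_rep A)" and "A = padic_class p (padic_rep A)"
proof -
  obtain S where A: "A = padic_class p S" and S: "padic_cauchy p S"
    using assms unfolding Qp_simps by blast
  show cauchy: "padic_cauchy p (padic_rep A)" using padic_rep_class(1)[OF S] A by simp
  show "A = padic_class p (padic_rep A)"
    using A padic_class_eq_iff[OF S cauchy] padic_rep_class(2)[OF S] by simp
qed

lemma Qp_mult_closed: "A \<in> carrier (Qp p) \<Longrightarrow> B \<in> carrier (Qp p) \<Longrightarrow> A \<otimes>\<^bsub>Qp p\<^esub> B \<in> carrier (Qp p)"
  unfolding Qp_simps(2) by (intro padic_class_in_carrier padic_cauchy_mult Qp_carrier_rep)

lemma Qp_add_closed: "A \<in> carrier (Qp p) \<Longrightarrow> B \<in> carrier (Qp p) \<Longrightarrow> A \<oplus>\<^bsub>Qp p\<^esub> B \<in> carrier (Qp p)"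
  unfolding Qp_simps(3) by (intro padic_class_in_carrier padic_cauchy_add Qp_carrier_rep)

lemma Qp_const_closed: "padic_class p (\<lambda>n. c) \<in> carrier (Qp p)"
  by (intro padic_class_in_carrier padic_cauchy_const)

lemma Qp_one_closed: "\<one>\<^bsub>Qp p\<^esub> \<in> carrier (Qp p)"
  unfolding Qp_simps(4) by (rule Qp_const_closed)

lemma Qp_zero_closed: "\<zero>\<^bsub>Qp p\<^esub> \<in> carrier (Qp p)"
  unfolding Qp_simps(5) by (rule Qp_const_closed)

lemma Qp_p_closed: "Qp_p p \<in> carrier (Qp p)"
  unfolding Qp_p_def by (rule Qp_const_closed)

lemma Qp_pow_closed: "A \<in> carrier (Qp p) \<Longrightarrow> A [^]\<^bsub>Qp p\<^esub> (n::nat) \<in> carrier (Qp p)"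
  by (induct n) (auto intro: Qp_mult_closed Qp_one_closed)

lemma Qp_uminus_closed: "A \<in> carrier (Qp p) \<Longrightarrow> Qp_uminus p A \<in> carrier (Qp p)"
  unfolding Qp_uminus_def by (intro padic_class_in_carrier padic_cauchy_minus Qp_carrier_rep)

lemma Qp_nonzero_not_null:
  assumes "A \<in> carrier (Qp p)" "A \<noteq> \<zero>\<^bsub>Qp p\<^esub>"
  shows "\<not> padic_null p (padic_rep A)"
  using assms padic_class_eq_iff[OF Qp_carrier_rep(1)[OF assms(1)] padic_cauchy_const, of 0]
    Qp_carrier_rep(2)[OF assms(1)] unfolding Qp_simps(5) by auto

lemma Qp_inverse_closed:
  "A \<in> carrier (Qp p) \<Longrightarrow> A \<noteq> \<zero>\<^bsub>Qp p\<^esub> \<Longrightarrow> Qp_inverse p A \<in> carrier (Qp p)"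
  unfolding Qp_inverse_def
  by (intro padic_class_in_carrier padic_cauchy_inverse Qp_carrier_rep Qp_nonzero_not_null)

lemma Qp_add_uminus_eq_zero_iff:
  assumes A: "A \<in> carrier (Qp p)" and B: "B \<in> carrier (Qp p)"
  shows "A \<oplus>\<^bsub>Qp p\<^esub> Qp_uminus p B = \<zero>\<^bsub>Qp p\<^esub> \<longleftrightarrow> A = B"
proof -
  let ?S = "\<lambda>n. - padic_rep B n" and ?T = "padic_rep (Qp_uminus p B)"
  have S: "padic_cauchy p ?S" by (intro padic_cauchy_minus Qp_carrier_rep B)
  have T: "padic_cauchy p ?T" and ST: "padic_null p (\<lambda>n. ?S n - ?T n)"
    unfolding Qp_uminus_def using padic_rep_class[OF S] by auto
  have RA: "padic_cauchy p (padic_rep A)" and RB: "padic_cauchy p (padic_rep B)"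
    using Qp_carrier_rep A B by auto
  have "A \<oplus>\<^bsub>Qp p\<^esub> Qp_uminus p B = \<zero>\<^bsub>Qp p\<^esub> \<longleftrightarrow> padic_null p (\<lambda>n. padic_rep A n + ?T n)"
    unfolding Qp_simps(3,5) using padic_class_eq_iff[OF padic_cauchy_add[OF RA T] padic_cauchy_const]
    by simp
  also have "\<dots> \<longleftrightarrow> padic_null p (\<lambda>n. padic_rep A n - padic_rep B n)"
    using padic_null_add[OF _ ST, of "\<lambda>n. padic_rep A n + ?T n"]
      padic_null_diff[OF _ ST, of "\<lambda>n. padic_rep A n - padic_rep B n"]
    by (auto simp: algebra_simps)
  also have "\<dots> \<longleftrightarrow> A = B"
    using padic_class_eq_iff[OF RA RB] Qp_carrier_rep(2) A B by metis
  finally show ?thesis .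
qed

lemma Qp_mult_inverse:
  assumes A: "A \<in> carrier (Qp p)" "A \<noteq> \<zero>\<^bsub>Qp p\<^esub>"
  shows "A \<otimes>\<^bsub>Qp p\<^esub> Qp_inverse p A = \<one>\<^bsub>Qp p\<^esub>"
proof -
  let ?S = "\<lambda>n. inverse (padic_rep A n)" and ?T = "padic_rep (Qp_inverse p A)"
  have RA: "padic_cauchy p (padic_rep A)" using Qp_carrier_rep A by auto
  have S: "padic_cauchy p ?S" by (intro padic_cauchy_inverse RA Qp_nonzero_not_null A)
  have T: "padic_cauchy p ?T" and ST: "padic_null p (\<lambda>n. ?S n - ?T n)"
    unfolding Qp_inverse_def using padic_rep_class[OF S] by auto
  obtain N c where c: "c > 0" "\<And>n. N \<le> n \<Longrightarrow> padic_abs p (padic_rep A n) = c"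
    using padic_cauchy_abs_eventually_const[OF RA Qp_nonzero_not_null[OF A]] by blast
  obtain B where B: "\<And>n. padic_abs p (padic_rep A n) \<le> B" using padic_cauchy_bounded[OF RA] by blast
  have "padic_null p (\<lambda>n. (?S n - ?T n) * padic_rep A n)"
    by (rule padic_null_mult_bounded[OF ST B])
  moreover have "padic_rep A n \<noteq> 0" if "N \<le> n" for n
    using c that by force
  hence "eventually (\<lambda>n. (?S n - ?T n) * padic_rep A n = - (padic_rep A n * ?T n - 1)) sequentially"
    unfolding eventually_sequentially by (intro exI[of _ N]) (auto simp: algebra_simps)
  ultimately have "padic_null p (\<lambda>n. - (padic_rep A n * ?T n - 1))"
    by (rule padic_null_eventually_eq)
  hence "padic_null p (\<lambda>n. padic_rep A n * ?T n - 1)"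
    using padic_null_minus by fastforce
  thus ?thesis unfolding Qp_simps(2,4)
    using padic_class_eq_iff[OF padic_cauchy_mult[OF RA T] padic_cauchy_const] by simp
qed

lemma Qp_zero_add_zero: "\<zero>\<^bsub>Qp p\<^esub> \<oplus>\<^bsub>Qp p\<^esub> \<zero>\<^bsub>Qp p\<^esub> = \<zero>\<^bsub>Qp p\<^esub>"
proof -
  let ?Z = "padic_rep (\<zero>\<^bsub>Qp p\<^esub>)"
  have Z: "padic_cauchy p ?Z" "padic_null p (\<lambda>n. 0 - ?Z n)"
    unfolding Qp_simps(5) using padic_rep_class[OF padic_cauchy_const[of 0]] by auto
  have "padic_null p (\<lambda>n. (?Z n + ?Z n) - 0)"
    using padic_null_minus[OF padic_null_add[OF Z(2) Z(2)]] by simp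
  thus ?thesis
    unfolding Qp_simps(3) using padic_class_eq_iff[OF padic_cauchy_add[OF Z(1) Z(1)] padic_cauchy_const]
    by (simp add: Qp_simps(5))
qed

lemma Qp_abs_class:
  assumes "padic_cauchy p S"
  shows "(\<lambda>n. padic_abs p (S n)) \<longlonglongrightarrow> Qp_abs p (padic_class p S)"
proof -
  let ?T = "padic_rep (padic_class p S)"
  have "(\<lambda>n. padic_abs p (?T n)) \<longlonglongrightarrow> Qp_abs p (padic_class p S)"
    unfolding Qp_abs_def
    using padic_cauchy_abs_convergent[OF padic_rep_class(1)[OF assms]] by (simp add: convergent_LIMSEQ_iff)
  hence "(\<lambda>n. padic_abs p (?T n) + (padic_abs p (S n) - padic_abs p (?T n)))
           \<longlonglongrightarrow> Qp_abs p (padic_class p S) + 0"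
    by (intro tendsto_add padic_null_diff_abs_tendsto padic_rep_class(2)[OF assms])
  thus ?thesis by simp
qed

lemma Qp_abs_const: "Qp_abs p (padic_class p (\<lambda>n. c)) = padic_abs p c"
  using Qp_abs_class[OF padic_cauchy_const, of c] by (simp add: LIMSEQ_const_iff)

lemma Qp_abs_p: "Qp_abs p (Qp_p p) = inverse (real p)"
  unfolding Qp_p_def Qp_abs_const padic_abs_p ..

lemma Qp_abs_mult:
  assumes "A \<in> carrier (Qp p)" "B \<in> carrier (Qp p)"
  shows "Qp_abs p (A \<otimes>\<^bsub>Qp p\<^esub> B) = Qp_abs p A * Qp_abs p B"
proof -
  have "(\<lambda>n. padic_abs p (padic_rep A n * padic_rep B n)) \<longlonglongrightarrow> Qp_abs p A * Qp_abs p B"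
    unfolding padic_abs_mult using assms
    by (intro tendsto_mult) (metis Qp_abs_class Qp_carrier_rep)+
  moreover have "padic_cauchy p (\<lambda>n. padic_rep A n * padic_rep B n)"
    by (intro padic_cauchy_mult Qp_carrier_rep assms)
  ultimately show ?thesis unfolding Qp_simps(2) using Qp_abs_class LIMSEQ_unique by blast
qed

lemma Qp_abs_pow: "A \<in> carrier (Qp p) \<Longrightarrow> Qp_abs p (A [^]\<^bsub>Qp p\<^esub> (n::nat)) = Qp_abs p A ^ n"
  by (induct n) (simp_all add: Qp_abs_mult Qp_pow_closed Qp_simps(4) Qp_abs_const)

lemma Qp_abs_powr:
  assumes "A \<in> carrier (Qp p)" "A \<noteq> \<zero>\<^bsub>Qp p\<^esub>"
  obtains k :: int where "Qp_abs p A = real p powr k"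
proof -
  have R: "padic_cauchy p (padic_rep A)" "A = padic_class p (padic_rep A)"
    using Qp_carrier_rep assms(1) by auto
  obtain N c where c: "c > 0" "\<And>n. N \<le> n \<Longrightarrow> padic_abs p (padic_rep A n) = c"
    using padic_cauchy_abs_eventually_const[OF R(1) Qp_nonzero_not_null[OF assms]] by blast
  have "(\<lambda>n. padic_abs p (padic_rep A n)) \<longlonglongrightarrow> c"
    by (rule tendsto_eventually) (use c(2) in \<open>auto simp: eventually_sequentially\<close>)
  hence "Qp_abs p A = padic_abs p (padic_rep A N)"
    using Qp_abs_class[OF R(1)] R(2) c(2)[of N] LIMSEQ_unique by fastforce
  moreover have "padic_rep A N \<noteq> 0" using c by force
  ultimately show ?thesis using padic_abs_powr that by metis
qed

lemma Qp_p_nonzero: "Qp_p p \<noteq> \<zero>\<^bsub>Qp p\<^esub>"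
  using Qp_abs_p p_gt_1 Qp_abs_const[of 0] unfolding Qp_simps(5) by auto

lemma Qp_pow_eq_p_pow_imp_dvd:
  assumes C: "C \<in> carrier (Qp p)" and "a > 0"
    and eq: "C [^]\<^bsub>Qp p\<^esub> a = Qp_p p [^]\<^bsub>Qp p\<^esub> (b::nat)"
  shows "a dvd b"
proof -
  have abs_eq: "Qp_abs p C ^ a = inverse (real p) ^ b"
    using arg_cong[OF eq, of "Qp_abs p"] by (simp add: Qp_abs_pow C Qp_p_closed Qp_abs_p)
  have "C \<noteq> \<zero>\<^bsub>Qp p\<^esub>"
  proof
    assume "C = \<zero>\<^bsub>Qp p\<^esub>"
    hence "Qp_abs p C = 0" by (simp add: Qp_simps(5) Qp_abs_const)
    thus False using abs_eq \<open>a > 0\<close> p_gt_1 by (simp add: zero_power)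
  qed
  then obtain k :: int where k: "Qp_abs p C = real p powr k" using Qp_abs_powr C by blast
  have "real a * k = - real b"
    using arg_cong[OF abs_eq, of "log (real p)"] p_gt_1
    by (simp add: k log_nat_power log_inverse)
  hence "real_of_int (int a * k) = real_of_int (- int b)" by simp
  hence "int b = int a * (- k)" by (simp only: of_int_eq_iff)
  thus ?thesis by (metis dvdI of_nat_dvd_iff)
qed

end

section \<open>Embeddings of \<open>Qp p\<close> into a field\<close>

locale Qp_embedding = padic p + field R
  for p :: nat and R :: "('a, 'b) ring_scheme" (structure) +
  fixes h :: "(nat \<Rightarrow> rat) set \<Rightarrow> 'a"
  assumes hom: "h \<in> ring_hom (Qp p) R"
begin

lemma hom_closed: "A \<in> carrier (Qp p) \<Longrightarrow> h A \<in> carrier R"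
  by (rule ring_hom_closed[OF hom])

lemma hom_zero: "h \<zero>\<^bsub>Qp p\<^esub> = \<zero>"
proof -
  have "h \<zero>\<^bsub>Qp p\<^esub> \<oplus> h \<zero>\<^bsub>Qp p\<^esub> = h \<zero>\<^bsub>Qp p\<^esub>"
    using ring_hom_add[OF hom Qp_zero_closed Qp_zero_closed] Qp_zero_add_zero by simp
  thus ?thesis using add.l_cancel_one'[OF hom_closed[OF Qp_zero_closed] hom_closed[OF Qp_zero_closed]]
    by simp
qed

lemma hom_uminus:
  assumes A: "A \<in> carrier (Qp p)"
  shows "h (Qp_uminus p A) = \<ominus> h A"
proof (rule minus_equality[symmetric])
  show "h (Qp_uminus p A) \<oplus> h A = \<zero>"
    using ring_hom_add[OF hom A Qp_uminus_closed[OF A]] Qp_add_uminus_eq_zero_iff[OF A A] hom_zero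
      add.m_comm[OF hom_closed[OF A] hom_closed[OF Qp_uminus_closed[OF A]]] by simp
qed (use A Qp_uminus_closed hom_closed in auto)

lemma hom_nonzero:
  assumes A: "A \<in> carrier (Qp p)" "A \<noteq> \<zero>\<^bsub>Qp p\<^esub>"
  shows "h A \<noteq> \<zero>"
proof
  assume "h A = \<zero>"
  hence "h (A \<otimes>\<^bsub>Qp p\<^esub> Qp_inverse p A) = \<zero>"
    using ring_hom_mult[OF hom A(1) Qp_inverse_closed[OF A]] hom_closed[OF Qp_inverse_closed[OF A]]
    by simp
  thus False using Qp_mult_inverse[OF A] ring_hom_one[OF hom] by simp
qed

lemma hom_inj: "inj_on h (carrier (Qp p))"
proof (rule inj_onI)
  fix A B assume A: "A \<in> carrier (Qp p)" and B: "B \<in> carrier (Qp p)" and "h A = h B"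
  hence "h (A \<oplus>\<^bsub>Qp p\<^esub> Qp_uminus p B) = \<zero>"
    using ring_hom_add[OF hom A Qp_uminus_closed[OF B]] hom_uminus[OF B] hom_closed[OF B]
    by (simp add: r_neg)
  thus "A = B"
    using hom_nonzero[OF Qp_add_closed[OF A Qp_uminus_closed[OF B]]]
      Qp_add_uminus_eq_zero_iff[OF A B] by blast
qed

lemma hom_pow: "A \<in> carrier (Qp p) \<Longrightarrow> h (A [^]\<^bsub>Qp p\<^esub> (n::nat)) = h A [^] n"
  by (induct n) (simp_all add: ring_hom_one[OF hom] ring_hom_mult[OF hom] Qp_pow_closed)

lemma image_subfield: "subfield (h ` carrier (Qp p)) R"
proof (rule subfieldI')
  show "subring (h ` carrier (Qp p)) R"
  proof (rule subringI)
    show "h ` carrier (Qp p) \<subseteq> carrier R" using hom_closed by blast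
    show "\<one> \<in> h ` carrier (Qp p)" using ring_hom_one[OF hom] Qp_one_closed by force
    show "\<ominus> x \<in> h ` carrier (Qp p)" if "x \<in> h ` carrier (Qp p)" for x
      using that hom_uminus Qp_uminus_closed by force
    show "x \<otimes> y \<in> h ` carrier (Qp p)" if "x \<in> h ` carrier (Qp p)" "y \<in> h ` carrier (Qp p)" for x y
      using that by (auto simp flip: ring_hom_mult[OF hom] intro: Qp_mult_closed)
    show "x \<oplus> y \<in> h ` carrier (Qp p)" if "x \<in> h ` carrier (Qp p)" "y \<in> h ` carrier (Qp p)" for x y
      using that by (auto simp flip: ring_hom_add[OF hom] intro: Qp_add_closed)
  qed
  show "inv k \<in> h ` carrier (Qp p)" if k: "k \<in> h ` carrier (Qp p) - {\<zero>}" for k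
  proof -
    obtain A where A: "A \<in> carrier (Qp p)" "k = h A" using k by blast
    hence nz: "A \<noteq> \<zero>\<^bsub>Qp p\<^esub>" using k hom_zero by auto
    have "h A \<otimes> h (Qp_inverse p A) = \<one>"
      using ring_hom_mult[OF hom A(1) Qp_inverse_closed[OF A(1) nz]] Qp_mult_inverse[OF A(1) nz]
        ring_hom_one[OF hom] by simp
    hence "inv k = h (Qp_inverse p A)"
      using A hom_closed Qp_inverse_closed[OF A(1) nz] comm_inv_char by simp
    thus ?thesis using Qp_inverse_closed[OF A(1) nz] by blast
  qed
qed

lemma hom_pow_eq_p_pow_imp_dvd:
  assumes "C \<in> carrier (Qp p)" "a > 0" "h C [^] a = h (Qp_p p) [^] (b::nat)"
  shows "a dvd b"
proof (rule Qp_pow_eq_p_pow_imp_dvd[OF assms(1,2)])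
  show "C [^]\<^bsub>Qp p\<^esub> a = Qp_p p [^]\<^bsub>Qp p\<^esub> b"
    using assms(3) hom_pow[OF assms(1)] hom_pow[OF Qp_p_closed]
      inj_onD[OF hom_inj _ Qp_pow_closed[OF assms(1)] Qp_pow_closed[OF Qp_p_closed]] by simp
qed

end


section \<open>Polynomials and field extensions\<close>

lemma (in domain) monic_root_factor:
  assumes f: "f \<in> carrier (poly_ring R)" "hd f = \<one>" and root: "is_root f a"
  obtains g where "g \<in> carrier (poly_ring R)" "g \<noteq> []" "hd g = \<one>" "length g = length f - 1"
    and "\<And>x. x \<in> carrier R \<Longrightarrow> eval f x = eval [\<one>, \<ominus> a] x \<otimes> eval g x"
proof -
  let ?b = "[\<one>, \<ominus> a]"
  have a: "a \<in> carrier R" "f \<noteq> []" using root unfolding is_root_def by auto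
  obtain g where g: "g \<in> carrier (poly_ring R)" "f = ?b \<otimes>\<^bsub>poly_ring R\<^esub> g"
    using is_root_imp_pdivides[OF f(1) root] unfolding pdivides_def factor_def by blast
  have fg: "f = poly_mult ?b g" using g(2) by (simp add: univ_poly_mult)
  have pb: "polynomial (carrier R) ?b" using a(1) by (simp add: polynomial_def)
  have pg: "polynomial (carrier R) g" using g(1) univ_poly_carrier by blast
  have "length f - 1 = (if ?b = [] \<or> g = [] then 0 else (length ?b - 1) + (length g - 1))"
    unfolding fg by (rule poly_mult_degree_eq[OF carrier_is_subring pb pg])
  moreover have g_ne: "g \<noteq> []" using fg a(2) by auto
  ultimately have "length g = length f - 1" by simp
  moreover have "hd f = hd ?b \<otimes> hd g"
    unfolding fg by (rule poly_mult_lead_coeff[OF carrier_is_subring pb pg]) (use g_ne in auto)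
  hence "hd g = \<one>"
    using f(2) pg g_ne unfolding polynomial_def by (auto intro: hd_in_set)
  moreover have "eval f x = eval ?b x \<otimes> eval g x" if "x \<in> carrier R" for x
    unfolding fg using pb pg that by (intro eval_poly_mult) (auto simp: polynomial_def)
  ultimately show ?thesis using that g(1) g_ne by blast
qed

text \<open>Squaring removes the sign \<open>(-1)\<^sup>d\<close> relating the constant term of a monic polynomial of
  degree \<open>d\<close> to the product of its roots.\<close>
lemma (in algebraically_closed) eval_zero_pow_of_roots_pow:
  fixes N :: nat
  assumes "f \<in> carrier (poly_ring L)" "f \<noteq> []" "hd f = \<one>" "c \<in> carrier L"
    and "\<And>b. b \<in> carrier L \<Longrightarrow> eval f b = \<zero> \<Longrightarrow> b [^] N = c"
  shows "eval f \<zero> [^] (2 * N) = c [^] (2 * (length f - 1))"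
  using assms
proof (induct "length f - 1" arbitrary: f)
  case 0
  hence "f = [\<one>]" by (cases f) auto
  thus ?case by simp
next
  case (Suc n f)
  have "size (roots f) = Suc n"
    using roots_over_carrier[OF Suc(3)] Suc(2) unfolding splitted_def by simp
  then obtain a where "a \<in># roots f" by (metis multiset_nonemptyE size_empty nat.simps(3))
  hence root: "is_root f a" using roots_mem_iff_is_root[OF Suc(3)] by simp
  hence a: "a \<in> carrier L" "eval f a = \<zero>" unfolding is_root_def by auto
  obtain g where g: "g \<in> carrier (poly_ring L)" "g \<noteq> []" "hd g = \<one>" "length g = length f - 1"
    and eval_f: "\<And>x. x \<in> carrier L \<Longrightarrow> eval f x = eval [\<one>, \<ominus> a] x \<otimes> eval g x"
    using monic_root_factor[OF Suc(3,5) root] by blast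
  have g0: "eval g x \<in> carrier L" if "x \<in> carrier L" for x
    using g(1) that by (simp add: eval_in_carrier polynomial_incl univ_poly_carrier[symmetric])
  have "b [^] N = c" if "b \<in> carrier L" "eval g b = \<zero>" for b
    using Suc(7)[OF that(1)] eval_f[OF that(1)] that a(1) by simp
  moreover have deg_g: "n = length g - 1" using g(4) Suc(2) by simp
  ultimately have IH: "eval g \<zero> [^] (2 * N) = c [^] (2 * n)"
    using Suc(1)[OF deg_g g(1-3) Suc(6)] by simp
  have "(\<ominus> a) [^] (2 * N) = ((\<ominus> a) [^] (2::nat)) [^] N" by (simp add: nat_pow_pow a(1))
  also have "(\<ominus> a) [^] (2::nat) = a [^] (2::nat)"
    using a(1) by (simp add: numeral_2_eq_2 l_minus r_minus)
  also have "(a [^] (2::nat)) [^] N = (a [^] N) [^] (2::nat)"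
    using a(1) by (simp add: nat_pow_pow mult.commute)
  finally have a_pow: "(\<ominus> a) [^] (2 * N) = c [^] (2::nat)" using Suc(7)[OF a] by simp
  have "eval f \<zero> [^] (2 * N) = (\<ominus> a) [^] (2 * N) \<otimes> eval g \<zero> [^] (2 * N)"
    using eval_f[of \<zero>] a(1) g0[of \<zero>] by (simp add: nat_pow_distrib)
  also have "\<dots> = c [^] (2 * Suc n)" unfolding a_pow IH using Suc(6) by (simp add: nat_pow_mult)
  finally show ?case unfolding Suc(2)[symmetric] .
qed

definition (in ring) X_pow_minus :: "nat \<Rightarrow> 'a \<Rightarrow> 'a list" where
  "X_pow_minus n c = monom \<one> (n - 1) @ [\<ominus> c]"

lemma (in domain) X_pow_minus_carrier:
  assumes "subring K R" "c \<in> K"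
  shows "X_pow_minus n c \<in> carrier (K[X])"
proof -
  have "set (X_pow_minus n c) \<subseteq> {\<one>, \<zero>, \<ominus> c}"
    unfolding X_pow_minus_def monom_def by auto
  also have "\<dots> \<subseteq> K" using subringE(2,3,5)[OF assms(1)] assms(2) by auto
  finally have "set (X_pow_minus n c) \<subseteq> K" .
  moreover have "hd (X_pow_minus n c) = \<one>" unfolding X_pow_minus_def monom_def by simp
  ultimately show ?thesis by (simp add: univ_poly_carrier[symmetric] polynomial_def)
qed

lemma (in ring) eval_X_pow_minus:
  assumes "n > 0" "c \<in> carrier R" "x \<in> carrier R"
  shows "eval (X_pow_minus n c) x = x [^] n \<ominus> c"
proof -
  have "eval (X_pow_minus n c) x = x [^] (n - 1) \<otimes> x \<ominus> c"
    unfolding X_pow_minus_def a_minus_def using assms(2,3)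
    by (simp add: eval_append_aux monom_in_carrier eval_monom)
  also have "x [^] (n - 1) \<otimes> x = x [^] n"
    using assms(1,3) nat_pow_Suc[of x "n - 1"] by simp
  finally show ?thesis .
qed

lemma (in domain) pow_root_algebraic:
  fixes N :: nat
  assumes "subring K R" "c \<in> K" "x \<in> carrier R" "N > 0" "x [^] N = c"
  shows "(algebraic over K) x"
proof (rule algebraicI)
  show "X_pow_minus N c \<in> carrier (K[X])" by (rule X_pow_minus_carrier[OF assms(1,2)])
  show "X_pow_minus N c \<noteq> []" unfolding X_pow_minus_def by simp
  show "eval (X_pow_minus N c) x = \<zero>"
    using eval_X_pow_minus[OF assms(4) _ assms(3)] subringE(1)[OF assms(1)] assms(2,5) by auto
qed

lemma (in domain) IrrE_poly_ring:
  assumes "subfield K R" "x \<in> carrier R" "(algebraic over K) x"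
  shows "Irr K x \<in> carrier (poly_ring R)" and "Irr K x \<noteq> []" and "hd (Irr K x) = \<one>"
    and "eval (Irr K x) \<zero> \<in> K"
proof -
  have K: "subring K R" using subfieldE(1)[OF assms(1)] .
  have f: "Irr K x \<in> carrier (K[X])" using IrrE(1)[OF assms] .
  show "Irr K x \<in> carrier (poly_ring R)"
    using carrier_polynomial[OF K] f univ_poly_carrier by blast
  show ne: "Irr K x \<noteq> []"
    using domain.ring_irreducibleE(1)[OF univ_poly_is_domain[OF K] f] IrrE(2)[OF assms]
    by (simp add: univ_poly_zero)
  show "hd (Irr K x) = \<one>" using IrrE(3)[OF assms] by simp
  have "set (Irr K x) \<subseteq> K" using f ne unfolding univ_poly_carrier[symmetric] polynomial_def by auto
  thus "eval (Irr K x) \<zero> \<in> K"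
    using ring.eval_in_carrier[OF subring_is_ring[OF K], of "Irr K x" \<zero>] subringE(2)[OF K] K
    by simp
qed

lemma (in domain) Irr_roots_pow_eq:
  fixes N :: nat
  assumes K: "subfield K R" and "c \<in> K" "x \<in> carrier R" "N > 0" "x [^] N = c"
    and b: "b \<in> carrier R" "eval (Irr K x) b = \<zero>"
  shows "b [^] N = c"
proof -
  have c: "c \<in> carrier R" using subringE(1)[OF subfieldE(1)[OF K]] assms(2) by blast
  have alg: "(algebraic over K) x" by (rule pow_root_algebraic[OF subfieldE(1)[OF K] assms(2-5)])
  have "Irr K x pdivides X_pow_minus N c"
    by (rule Irr_minimal[OF K assms(3) alg X_pow_minus_carrier[OF subfieldE(1)[OF K] assms(2)]])
      (simp add: eval_X_pow_minus assms(3-5) c r_right_minus_eq)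
  hence "eval (X_pow_minus N c) b = \<zero>"
    by (rule pdivides_imp_root_sharing[OF IrrE_poly_ring(1)[OF K assms(3) alg] _ b])
  thus ?thesis using eval_X_pow_minus[OF assms(4) c b(1)] b(1) c r_right_minus_eq by simp
qed

lemma (in ring) finite_dimension_over_intermediate:
  assumes K: "subfield K R" and M: "subfield M R" and L: "subring L R"
    and "K \<subseteq> M" "M \<subseteq> L" "finite_dimension K L"
  shows "finite_dimension M L"
proof -
  obtain Vs where Vs: "set Vs \<subseteq> carrier R" "Span K Vs = L"
    using exists_base[OF K] assms(6) by blast
  have "Span M Vs = L"
  proof
    show "L \<subseteq> Span M Vs"
      unfolding Vs(2)[symmetric] Span_eq_combine_set[OF K Vs(1)] Span_eq_combine_set[OF M Vs(1)]
      using \<open>K \<subseteq> M\<close> by blast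
    have "set Vs \<subseteq> L" using Span_base_incl[OF K Vs(1)] Vs(2) by simp
    hence "M <#> set Vs \<subseteq> L"
      unfolding set_mult_def using \<open>M \<subseteq> L\<close> subringE(6)[OF L] by blast
    thus "Span M Vs \<subseteq> L" by (rule Span_min[OF M Vs(1) subring.axioms(1)[OF L]])
  qed
  thus ?thesis using Span_finite_dimension[OF M Vs(1)] by simp
qed

lemma (in ring) dim_dvd_tower:
  assumes "subfield K R" "subfield F R" "subfield M R" "subring L R"
    and "K \<subseteq> M" "M \<subseteq> L"
    and "finite_dimension K F" "finite_dimension F L" "finite_dimension K M"
  shows "(dim over K) M dvd (dim over K) F * (dim over F) L"
proof -
  have KL: "finite_dimension K L" and "(dim over K) L = (dim over K) F * (dim over F) L"
    using telescopic_base_dim[OF assms(1,2,7,8)] by auto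
  moreover have "(dim over K) L = (dim over K) M * (dim over M) L"
    using telescopic_base_dim(2)[OF assms(1,3,9)
        finite_dimension_over_intermediate[OF assms(1,3,4,5,6) KL]] .
  ultimately show ?thesis by (metis dvd_triv_left)
qed

lemma (in domain) dim_pos:
  assumes "subfield K R" "finite_dimension K E" "K \<subseteq> E"
  shows "(dim over K) E > 0"
proof (rule ccontr)
  assume "\<not> (dim over K) E > 0"
  hence "E = {\<zero>}" using dimension_zero[OF assms(1)] finite_dimensionE[OF assms(1,2)] by simp
  thus False using assms(3) subringE(3)[OF subfieldE(1)[OF assms(1)]] one_not_zero by blast
qed

section \<open>Roots of \<open>p\<close>\<close>

context Qp_embedding
begin

lemma dim_simple_extension_root_of_p:
  assumes closed: "algebraically_closed R"
    and \<alpha>: "\<alpha> \<in> carrier R" "N > 0" "\<alpha> [^] N = h (Qp_p p)"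
  defines "K \<equiv> h ` carrier (Qp p)"
  shows "finite_dimension K (simple_extension K \<alpha>)"
    and "N dvd (dim over K) (simple_extension K \<alpha>)"
proof -
  let ?\<pi> = "h (Qp_p p)" and ?f = "Irr K \<alpha>"
  have K: "subfield K R" unfolding K_def by (rule image_subfield)
  have \<pi>: "?\<pi> \<in> K" "?\<pi> \<in> carrier R" unfolding K_def using Qp_p_closed hom_closed by auto
  have alg: "(algebraic over K) \<alpha>" by (rule pow_root_algebraic[OF subfieldE(1)[OF K] \<pi>(1) \<alpha>])
  thus "finite_dimension K (simple_extension K \<alpha>)"
    using finite_dimension_simple_extension[OF K \<alpha>(1)] by blast
  obtain C where C: "C \<in> carrier (Qp p)" "eval ?f \<zero> = h C"
    using IrrE_poly_ring(4)[OF K \<alpha>(1) alg] unfolding K_def by blast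
  have "h C [^] (2 * N) = ?\<pi> [^] (2 * (length ?f - 1))"
    using algebraically_closed.eval_zero_pow_of_roots_pow[OF closed IrrE_poly_ring(1-3)[OF K \<alpha>(1) alg]
        \<pi>(2) Irr_roots_pow_eq[OF K \<pi>(1) \<alpha>]] C(2)
    by simp
  hence "2 * N dvd 2 * (length ?f - 1)"
    by (rule hom_pow_eq_p_pow_imp_dvd[OF C(1), rotated]) (use \<alpha>(2) in simp)
  thus "N dvd (dim over K) (simple_extension K \<alpha>)"
    using simple_extension_dim[OF K \<alpha>(1) alg] by simp
qed

lemma root_of_p_dvd_degrees:
  assumes closed: "algebraically_closed R"
    and F: "subfield F R" "h ` carrier (Qp p) \<subseteq> F" "finite_dimension (h ` carrier (Qp p)) F"
    and \<alpha>: "\<alpha> \<in> carrier R" "(algebraic over F) \<alpha>" "N > 0" "\<alpha> [^] N = h (Qp_p p)"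
  shows "N dvd (dim over (h ` carrier (Qp p))) F * (dim over F) (simple_extension F \<alpha>)"
proof -
  let ?K = "h ` carrier (Qp p)"
  let ?M = "simple_extension ?K \<alpha>" and ?L = "simple_extension F \<alpha>"
  have K: "subfield ?K R" by (rule image_subfield)
  have L: "subfield ?L R" using simple_extension_is_subfield[OF F(1) \<alpha>(1)] \<alpha>(2) by blast
  have M: "subfield ?M R"
    using simple_extension_is_subfield[OF K \<alpha>(1)] finite_dimension_simple_extension[OF K \<alpha>(1)]
      dim_simple_extension_root_of_p(1)[OF closed \<alpha>(1,3,4)] by blast
  have "?M \<subseteq> ?L"
    using simple_extension_subring_incl[OF subfieldE(1)[OF L]] F(2)
      simple_extension_incl[OF subringE(1)[OF subfieldE(1)[OF F(1)]] \<alpha>(1)]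
      simple_extension_mem[OF subfieldE(1)[OF F(1)] \<alpha>(1)] by blast
  hence "(dim over ?K) ?M dvd (dim over ?K) F * (dim over F) ?L"
    using dim_dvd_tower[OF K F(1) M subfieldE(1)[OF L]
        simple_extension_incl[OF subringE(1)[OF subfieldE(1)[OF K]] \<alpha>(1)] _ F(3)]
      finite_dimension_simple_extension[OF F(1) \<alpha>(1)] \<alpha>(2)
      dim_simple_extension_root_of_p(1)[OF closed \<alpha>(1,3,4)] by blast
  thus ?thesis using dim_simple_extension_root_of_p(2)[OF closed \<alpha>(1,3,4)] dvd_trans by blast
qed

lemma exists_subextension_multiplicity_ge:
  fixes l :: nat
  assumes closed: "algebraically_closed R" and l: "Factorial_Ring.prime l"
    and F: "subfield F R" "h ` carrier (Qp p) \<subseteq> F" "finite_dimension (h ` carrier (Qp p)) F"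
    and Xi: "subfield Xi R" "F \<subseteq> Xi" "\<And>x. x \<in> Xi \<Longrightarrow> (algebraic over F) x"
    and divisible: "\<And>x. x \<in> Xi - {\<zero>} \<Longrightarrow> \<exists>y \<in> Xi - {\<zero>}. y [^] l = x"
  shows "\<exists>L. subfield L R \<and> F \<subseteq> L \<and> L \<subseteq> Xi \<and> finite_dimension F L \<and>
           n \<le> multiplicity l ((dim over F) L)"
proof -
  define d where "d = (dim over (h ` carrier (Qp p))) F"
  have "d > 0" unfolding d_def using dim_pos[OF image_subfield F(3,2)] .
  let ?N = "l ^ (n + multiplicity l d)"
  have Xi_carrier: "Xi \<subseteq> carrier R" using subringE(1)[OF subfieldE(1)[OF Xi(1)]] .
  have "h (Qp_p p) \<in> Xi - {\<zero>}"
    using hom_nonzero[OF Qp_p_closed Qp_p_nonzero] Qp_p_closed F(2) Xi(2) by blast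
  then obtain \<alpha> where \<alpha>: "\<alpha> \<in> Xi" "\<alpha> [^] ?N = h (Qp_p p)"
    using iterated_root_pow[of "Xi - {\<zero>}"] divisible Xi_carrier by blast
  have \<alpha>R: "\<alpha> \<in> carrier R" using \<alpha>(1) Xi_carrier by blast
  let ?L = "simple_extension F \<alpha>"
  have L: "subfield ?L R" "F \<subseteq> ?L" "?L \<subseteq> Xi" "finite_dimension F ?L"
    using simple_extension_is_subfield[OF F(1) \<alpha>R] finite_dimension_simple_extension[OF F(1) \<alpha>R]
      simple_extension_incl[OF subringE(1)[OF subfieldE(1)[OF F(1)]] \<alpha>R]
      simple_extension_subring_incl[OF subfieldE(1)[OF Xi(1)] Xi(2) \<alpha>(1)] Xi(3)[OF \<alpha>(1)]
    by auto
  have "?N dvd d * (dim over F) ?L"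
    using root_of_p_dvd_degrees[OF closed F \<alpha>R Xi(3)[OF \<alpha>(1)] _ \<alpha>(2)] l
    unfolding d_def by (simp add: prime_gt_0_nat)
  hence "n + multiplicity l d \<le> multiplicity l d + multiplicity l ((dim over F) ?L)"
    using pow_dvd_mult_imp_le_multiplicity[OF l] \<open>d > 0\<close> dim_pos[OF F(1) L(4,2)] by simp
  thus ?thesis using L by auto
qed

end

theorem mainTheorem12:
  fixes R :: "('a, 'b) ring_scheme"
    and F Xi :: "'a set"
    and h :: "(nat \<Rightarrow> rat) set \<Rightarrow> 'a"
    and l p :: nat
  assumes "Factorial_Ring.prime l"
    and "Factorial_Ring.prime p"
    and "algebraically_closed R"
    and "h \<in> ring_hom (Qp p) R"
    and "subfield F R"
    and "h ` carrier (Qp p) \<subseteq> F"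
    and "ring.finite_dimension R (h ` carrier (Qp p)) F"
    and "subfield Xi R"
    and "F \<subseteq> Xi"
    and "\<forall>x \<in> Xi. \<not> ring.transcendental R F x"
    and "{x \<in> carrier R. x [^]\<^bsub>R\<^esub> l = \<one>\<^bsub>R\<^esub>} \<subseteq> Xi"
    and "\<forall>x \<in> Xi - {\<zero>\<^bsub>R\<^esub>}. \<exists>y \<in> Xi - {\<zero>\<^bsub>R\<^esub>}. y [^]\<^bsub>R\<^esub> l = x"
  shows "supernatural_degree R F Xi l = \<infinity>"
proof -
  interpret Qp_embedding p R h
    by (intro Qp_embedding.intro padic.intro Qp_embedding_axioms.intro assms(2,4)
        algebraically_closed.axioms(1)[OF assms(3)])
  have "\<exists>L. subfield L R \<and> F \<subseteq> L \<and> L \<subseteq> Xi \<and> finite_dimension F L \<and> n \<le> multiplicity l (dim F L)"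
    for n
    using exists_subextension_multiplicity_ge[OF assms(3,1,5-9)] assms(10,12)
    by (simp add: over_def)
  thus ?thesis unfolding supernatural_degree_def by (intro SUP_enat_eq_infinity) auto
qed

end
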